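(* Let $\varepsilon>0$, let $k:\mathbb{R}\to\mathbb{R}$ be $C^1$ with $k^{-1}(0)=\{0\}$ and $k'(0)>0$, and let $b_0,b_1,c:\mathbb{R}\to\mathbb{R}$ be $C^\infty$ with $b_1>0$, $b_1'<0$, $c>0$ and $c'(u)/c(u)>b_1'(u)/b_1(u)$ for all $u$. Put $b(u,a)=b_0(u)-ab_1(u)$, $h(u,a)=b(u,a)/c(u)$, and assume that for every $a\in\mathbb{R}$ the function $h(\cdot,a)$ has finitely many critical points, all isolated, and that $h(u,a)\to-\infty$ as $|u|\to\infty$ for every $a\ge 0$. Consider for each $a\in\mathbb{R}$ the reduced vector field $\widetilde f(\cdot,a)$ on $\mathbb{R}^2$, $$\widetilde f((u,n),a)=\Big(\varepsilon\big(\partial_u b(u,a)-c'(u)n\big),\ \tfrac{1}{\widetilde{k}(n)}\big(b(u,a)-c(u)n\big)\Big),$$ with $\widetilde{k}(n)=k(n)/n$ for $n\ne0$, $\widetilde k(0)=k'(0)$, and its flow $\widetilde{\phi}^a$. Let $\mathcal{P}=\{(x,a)\in\mathbb{R}^2\times\mathbb{R}\mid \widetilde f(x,a)=0\}=\{((u,n),a)\mid a=a_\star(u),\ n=h_\star(u)\}$, where $a_\star$ is the smooth function with $\partial_u h(u,a_\star(u))=0$ and $h_\star(u)=h(u,a_\star(u))$. Then $\mathcal{P}$ is partitioned into $$\mathcal{P}^{\mathrm{stab}}=\{(x,a)\in\mathcal P\mid a_\star'(u)>0\}\neq\emptyset,\quad \mathcal{P}^{\mathrm{unst}}=\{(x,a)\in\mathcal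 P\mid a_\star'(u)<0\},\quad \mathcal{P}^{\mathrm{bif}}=\{(x,a)\in\mathcal P\mid a_\star'(u)=0\},$$ where for $(x,a)\in\mathcal P^{\mathrm{stab}}$ the point $x$ is a stable node of $\widetilde{\phi}^{a}$, for $(x,a)\in\mathcal P^{\mathrm{unst}}$ it is a saddle of $\widetilde{\phi}^a$, and for $(x,a)\in\mathcal P^{\mathrm{bif}}$ it is an isolated nonhyperbolic equilibrium of $\widetilde\phi^a$. Moreover the subset $\{((u,n),a)\in\mathcal P^{\mathrm{bif}}\mid a_\star''(u)\neq0\}$ consists of generic fold (saddle-node) bifurcation points of the one-parameter family of flows $\widetilde{\phi}^{a}$.
   Context: Primes denote derivatives with respect to $u$. Explicitly, $a_\star(u)=\dfrac{b_0'(u)c(u)-b_0(u)c'(u)}{b_1'(u)c(u)-b_1(u)c'(u)}$, the denominator being nonzero by the assumption $c'/c>b_1'/b_1$. *)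

theory Defs
  imports "HOL-Analysis.Analysis"
begin

definition smooth_fun :: "(real \<Rightarrow> real) \<Rightarrow> bool" where
  "smooth_fun f \<longleftrightarrow> (\<forall>m x. ((deriv ^^ m) f) differentiable (at x))"

definition C1_fun :: "(real \<Rightarrow> real) \<Rightarrow> bool" where
  "C1_fun f \<longleftrightarrow> (\<forall>x. f differentiable (at x)) \<and> continuous_on UNIV (deriv f)"

definition eig2 :: "(real \<times> real \<Rightarrow> real \<times> real) \<Rightarrow> complex \<Rightarrow> bool" where
  "eig2 L lam \<longleftrightarrow> (\<exists>v1 v2 :: complex. (v1, v2) \<noteq> (0, 0) \<and>
     of_real (fst (L (1, 0))) * v1 + of_real (fst (L (0, 1))) * v2 = lam * v1 \<and>
     of_real (snd (L (1, 0))) * v1 + of_real (snd (L (0, 1))) * v2 = lam * v2)"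

definition dot2 :: "real \<times> real \<Rightarrow> real \<times> real \<Rightarrow> real" where
  "dot2 p q = fst p * fst q + snd p * snd q"

definition stable_node :: "(real \<times> real \<Rightarrow> real \<times> real) \<Rightarrow> real \<times> real \<Rightarrow> bool" where
  "stable_node V x \<longleftrightarrow> V x = 0 \<and>
     (\<exists>L. (V has_derivative L) (at x) \<and> (\<forall>lam. eig2 L lam \<longrightarrow> Im lam = 0 \<and> Re lam < 0))"

definition saddle :: "(real \<times> real \<Rightarrow> real \<times> real) \<Rightarrow> real \<times> real \<Rightarrow> bool" where
  "saddle V x \<longleftrightarrow> V x = 0 \<and>
     (\<exists>L. (V has_derivative L) (at x) \<and>
        (\<exists>lam mu. eig2 L lam \<and> eig2 L mu \<and> Im lam = 0 \<and> Im mu = 0 \<and> Re lam < 0 \<and> Re mu > 0))"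

definition isolated_nonhyperbolic_eq :: "(real \<times> real \<Rightarrow> real \<times> real) \<Rightarrow> real \<times> real \<Rightarrow> bool" where
  "isolated_nonhyperbolic_eq V x \<longleftrightarrow> V x = 0 \<and>
     (\<exists>e>0. \<forall>y. y \<noteq> x \<and> dist y x < e \<longrightarrow> V y \<noteq> 0) \<and>
     (\<exists>L. (V has_derivative L) (at x) \<and> (\<exists>lam. eig2 L lam \<and> Re lam = 0))"

text \<open>Generic fold (saddle-node) bifurcation point (x0,a0) of the one-parameter family of
  planar vector fields F(.,a) (Kuznetsov's conditions): equilibrium; the Jacobian has a simple
  eigenvalue 0 and no other eigenvalue on the imaginary axis; with right/left null vectors q, p,
  p.q = 1, the quadratic coefficient p.B(q,q) (B(q,q) = second derivative of F along q) is
  nonzero, and the transversality coefficient p.F_a is nonzero.\<close>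
definition generic_fold :: "(real \<times> real \<Rightarrow> real \<Rightarrow> real \<times> real) \<Rightarrow> real \<times> real \<Rightarrow> real \<Rightarrow> bool" where
  "generic_fold F x0 a0 \<longleftrightarrow> F x0 a0 = 0 \<and>
     (\<exists>L. ((\<lambda>x. F x a0) has_derivative L) (at x0) \<and>
        eig2 L 0 \<and> (\<exists>mu. eig2 L mu \<and> mu \<noteq> 0) \<and> (\<forall>mu. eig2 L mu \<longrightarrow> mu = 0 \<or> Re mu \<noteq> 0) \<and>
        (\<exists>p q. q \<noteq> 0 \<and> L q = 0 \<and> (\<forall>w. dot2 p (L w) = 0) \<and> dot2 p q = 1 \<and>
           (\<exists>g1 B e. e > 0 \<and>
              (\<forall>s. \<bar>s\<bar> < e \<longrightarrow> ((\<lambda>s. F (x0 + s *\<^sub>R q) a0) has_vector_derivative g1 s) (at s)) \<and>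
              (g1 has_vector_derivative B) (at 0) \<and> dot2 p B \<noteq> 0) \<and>
           (\<exists>Fa. ((\<lambda>a. F x0 a) has_vector_derivative Fa) (at a0) \<and> dot2 p Fa \<noteq> 0)))"

end

(*
  Put G a n = b(., a) - n c, so that the reduced field is (eps G', G / kt n) and its equilibria
  are the double zeros G = G' = 0 of G. The Wronskian of G with c is affine in a:
  wronskian (G a n) c = (acrit - a) * W with W = wronskian b1 c, where acrit is the paper's
  a_star and W < 0 by the hypothesis c'/c > b1'/b1. Hence the equilibria are a = acrit u,
  n = h(u, a), and differentiating the identity once, resp. twice, at an equilibrium gives
  acrit' W = G'' c and, if acrit' = 0, acrit'' W = G''' c.
  The Jacobian at an equilibrium is upper triangular with diagonal eps G'' and -c / kt n < 0,
  so the sign of acrit' decides between stable node, saddle and a zero eigenvalue; at a zero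
  eigenvalue G''' is the quadratic coefficient of the fold and -eps W / c its transversality
  coefficient. A stable equilibrium exists because b0 / c tends to -infinity at both ends, which
  makes acrit change sign from negative to positive.
*)
theory Submission
  imports Defs
begin

lemma smooth_fun_higher_DERIV:
  assumes "smooth_fun f"
  shows "((deriv ^^ m) f has_real_derivative (deriv ^^ Suc m) f x) (at x)"
  using assms[unfolded smooth_fun_def, rule_format, of m x]
  by (simp add: DERIV_deriv_iff_real_differentiable)

lemma smooth_fun_DERIV: "smooth_fun f \<Longrightarrow> (f has_real_derivative deriv f x) (at x)"
  using smooth_fun_higher_DERIV[of f 0] by simp

lemma smooth_fun_deriv: "smooth_fun f \<Longrightarrow> smooth_fun (deriv f)"
  unfolding smooth_fun_def by (metis funpow_Suc_right o_apply)

definition wronskian :: "(real \<Rightarrow> real) \<Rightarrow> (real \<Rightarrow> real) \<Rightarrow> real \<Rightarrow> real" where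
  "wronskian f g x = deriv f x * g x - f x * deriv g x"

lemma has_real_derivative_wronskian:
  assumes "smooth_fun f" "smooth_fun g"
  shows "(wronskian f g has_real_derivative
           deriv (deriv f) x * g x - f x * deriv (deriv g) x) (at x)"
  unfolding wronskian_def[abs_def]
  by (rule derivative_eq_intros smooth_fun_DERIV smooth_fun_deriv assms refl | simp)+

lemma deriv_wronskian:
  assumes "smooth_fun f" "smooth_fun g"
  shows "deriv (wronskian f g) = (\<lambda>x. deriv (deriv f) x * g x - f x * deriv (deriv g) x)"
  using DERIV_imp_deriv[OF has_real_derivative_wronskian[OF assms]] by blast

lemma has_derivative_fst_compose:
  fixes f :: "real \<Rightarrow> real"
  assumes "(f has_real_derivative f') (at (fst p))"
  shows "((\<lambda>x. f (fst x)) has_derivative (\<lambda>h. f' * fst h)) (at p)"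
  using DERIV_compose_FDERIV[OF assms has_derivative_fst[OF has_derivative_ident]]
  by (simp add: mult.commute)

lemma has_derivative_mult_isCont_at_zero:
  fixes g m :: "'a::real_normed_vector \<Rightarrow> real"
  assumes g: "(g has_derivative g') (at x)" and gx: "g x = 0" and m: "isCont m x"
  shows "((\<lambda>y. g y * m y) has_derivative (\<lambda>h. g' h * m x)) (at x)"
proof -
  have lin: "bounded_linear g'" using g by (rule has_derivative_bounded_linear)
  then obtain K where K: "\<And>h. norm (g' h) \<le> norm h * K"
    using bounded_linear.bounded by blast
  define r where "r = (\<lambda>y. \<bar>g y - g x - g' (y - x)\<bar> / norm (y - x))"
  have "(r \<longlongrightarrow> 0) (at x)"
    using g by (simp add: has_derivative_iff_norm r_def)
  then have bound_lim: "((\<lambda>y. r y * \<bar>m y\<bar> + K * \<bar>m y - m x\<bar>) \<longlongrightarrow> 0) (at x)"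
    using m by (auto simp: isCont_def intro!: tendsto_eq_intros)
  have bound: "\<bar>g y * m y - g x * m x - g' (y - x) * m x\<bar> / norm (y - x)
      \<le> r y * \<bar>m y\<bar> + K * \<bar>m y - m x\<bar>" for y
  proof -
    have "g y * m y - g x * m x - g' (y - x) * m x
        = (g y - g x - g' (y - x)) * m y + g' (y - x) * (m y - m x)"
      using gx by (simp add: algebra_simps)
    also have "\<bar>\<dots>\<bar> \<le> \<bar>g y - g x - g' (y - x)\<bar> * \<bar>m y\<bar> + (norm (y - x) * K) * \<bar>m y - m x\<bar>"
      using K[of "y - x"] unfolding abs_mult[symmetric] real_norm_def
      by (intro order.trans[OF abs_triangle_ineq] add_left_mono)
         (auto simp: abs_mult intro: mult_right_mono)
    finally have le: "\<bar>g y * m y - g x * m x - g' (y - x) * m x\<bar>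
        \<le> \<bar>g y - g x - g' (y - x)\<bar> * \<bar>m y\<bar> + (norm (y - x) * K) * \<bar>m y - m x\<bar>" .
    show ?thesis
    proof (cases "y = x")
      case False
      then show ?thesis
        using divide_right_mono[OF le, of "norm (y - x)"] by (simp add: r_def add_divide_distrib)
    qed (simp add: r_def)
  qed
  have "((\<lambda>y. \<bar>g y * m y - g x * m x - g' (y - x) * m x\<bar> / norm (y - x)) \<longlongrightarrow> 0) (at x)"
    by (rule tendsto_sandwich[OF _ _ tendsto_const bound_lim]) (simp_all add: bound)
  then show ?thesis
    using lin by (simp add: has_derivative_iff_norm bounded_linear_mult_const)
qed

lemma isCont_slope_at_zero:
  fixes k :: "real \<Rightarrow> real"
  assumes "(k has_real_derivative k') (at 0)" and "k 0 = 0" and "isCont k x"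
  shows "isCont (\<lambda>n. if n = 0 then k' else k n / n) x"
proof (cases "x = 0")
  case True
  have "((\<lambda>n. k n / n) \<longlongrightarrow> k') (at 0)"
    using assms(1,2) by (simp add: DERIV_def)
  then have "((\<lambda>n. if n = 0 then k' else k n / n) \<longlongrightarrow> k') (at 0)"
    by (rule Lim_transform_eventually) (simp add: eventually_at_filter)
  then show ?thesis
    using True by (simp add: isCont_def)
next
  case False
  have "isCont (\<lambda>n. k n / n) x"
    using False assms(3) by (intro continuous_intros) auto
  moreover have "\<forall>\<^sub>F n in nhds x. k n / n = (if n = 0 then k' else k n / n)"
    using t1_space_nhds[OF False] by eventually_elim simp
  ultimately show ?thesis
    using isCont_cong by fastforce
qed

lemma pos_if_isCont_nonzero:
  fixes g :: "real \<Rightarrow> real"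
  assumes "\<And>x. isCont g x" and "\<And>x. g x \<noteq> 0" and "g 0 > 0"
  shows "g x > 0"
proof (rule ccontr)
  assume "\<not> g x > 0"
  then have "g x < 0" using assms(2)[of x] by linarith
  then obtain z where "g z = 0"
    using IVT[where f=g and a=x and b=0 and y=0] IVT2[where f=g and a=0 and b=x and y=0] assms(1,3)
    by (cases "x \<le> 0") auto
  then show False using assms(2) by blast
qed

lemma slope_at_zero_isCont_pos:
  fixes k :: "real \<Rightarrow> real"
  assumes "C1_fun k" and "\<And>x. k x = 0 \<longleftrightarrow> x = 0" and "deriv k 0 > 0"
  defines "kt \<equiv> \<lambda>n. if n = 0 then deriv k 0 else k n / n"
  shows "isCont kt n" and "kt n > 0"
proof -
  have "(k has_real_derivative deriv k 0) (at 0)" and "isCont k x" for x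
    using assms(1) by (auto simp: C1_fun_def DERIV_deriv_iff_real_differentiable
        intro: differentiable_imp_continuous_within)
  then show cont: "isCont kt x" for x
    unfolding kt_def using assms(2) by (intro isCont_slope_at_zero) auto
  show "kt n > 0"
    by (rule pos_if_isCont_nonzero[OF cont]) (use assms(2,3) in \<open>auto simp: kt_def\<close>)
qed

lemma filterlim_at_bot_at_infinity_imp_deriv_signs:
  fixes \<phi> :: "real \<Rightarrow> real"
  assumes lim: "filterlim \<phi> at_bot at_infinity"
    and der: "\<And>x. (\<phi> has_real_derivative \<phi>' x) (at x)"
  shows "\<exists>z1 z2. z1 < z2 \<and> \<phi>' z1 > 0 \<and> \<phi>' z2 < 0"
proof -
  have "\<forall>\<^sub>F x in at_infinity. \<phi> x \<le> \<phi> 0 - 1"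
    using lim by (simp add: filterlim_at_bot)
  then obtain B where B: "\<And>x. norm x \<ge> B \<Longrightarrow> \<phi> x \<le> \<phi> 0 - 1"
    unfolding eventually_at_infinity by blast
  define x where "x = \<bar>B\<bar> + 1"
  have "x > 0" "norm x \<ge> B" "norm (- x) \<ge> B"
    by (auto simp: x_def)
  then have "\<phi> x < \<phi> 0" "\<phi> (- x) < \<phi> 0"
    using B[of x] B[of "- x"] by linarith+
  obtain z1 where "z1 < 0" "\<phi> 0 - \<phi> (- x) = x * \<phi>' z1"
    using MVT2[of "- x" 0 \<phi> \<phi>'] der \<open>x > 0\<close> by auto
  with \<open>\<phi> (- x) < \<phi> 0\<close> have "x * \<phi>' z1 > 0"
    by linarith
  with \<open>x > 0\<close> have "\<phi>' z1 > 0"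
    by (simp add: zero_less_mult_iff)
  obtain z2 where "0 < z2" "\<phi> x - \<phi> 0 = x * \<phi>' z2"
    using MVT2[of 0 x \<phi> \<phi>'] der \<open>x > 0\<close> by auto
  with \<open>\<phi> x < \<phi> 0\<close> have "x * \<phi>' z2 < 0"
    by linarith
  with \<open>x > 0\<close> have "\<phi>' z2 < 0"
    by (simp add: mult_less_0_iff)
  show ?thesis
    using \<open>z1 < 0\<close> \<open>0 < z2\<close> \<open>\<phi>' z1 > 0\<close> \<open>\<phi>' z2 < 0\<close>
    by (intro exI[of _ z1] exI[of _ z2]) auto
qed

definition upper_tri2 :: "real \<Rightarrow> real \<Rightarrow> real \<Rightarrow> real \<times> real \<Rightarrow> real \<times> real" where
  "upper_tri2 A B C = (\<lambda>h. (A * fst h + B * snd h, C * snd h))"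

lemma eig2_upper_tri2_iff:
  "eig2 (upper_tri2 A B C) lam \<longleftrightarrow> lam = of_real A \<or> lam = of_real C"
proof
  assume "eig2 (upper_tri2 A B C) lam"
  then obtain v1 v2 :: complex where "(v1, v2) \<noteq> (0, 0)"
    and "of_real A * v1 + of_real B * v2 = lam * v1" and "of_real C * v2 = lam * v2"
    unfolding eig2_def upper_tri2_def by auto
  then show "lam = of_real A \<or> lam = of_real C"
    by (cases "v2 = 0") auto
next
  have "eig2 (upper_tri2 A B C) (of_real A)"
    unfolding eig2_def upper_tri2_def by (rule exI[of _ 1], rule exI[of _ 0]) simp
  moreover have "eig2 (upper_tri2 A B C) (of_real C)" if "A \<noteq> C"
    unfolding eig2_def upper_tri2_def
    by (rule exI[of _ "of_real (B / (C - A))"], rule exI[of _ 1])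
       (use that in \<open>simp add: field_simps flip: of_real_mult of_real_add of_real_diff\<close>)
  ultimately show "lam = of_real A \<or> lam = of_real C \<Longrightarrow> eig2 (upper_tri2 A B C) lam"
    by (cases "A = C") auto
qed

locale reduced_field =
  fixes eps :: real and b0 b1 c kt :: "real \<Rightarrow> real"
  assumes eps_pos: "eps > 0"
    and smooth_b0: "smooth_fun b0" and smooth_b1: "smooth_fun b1" and smooth_c: "smooth_fun c"
    and c_pos: "c u > 0"
    and wronskian_b1_neg: "wronskian b1 c u < 0"
    and kt_cont: "isCont kt n" and kt_pos: "kt n > 0"
begin

definition G :: "real \<Rightarrow> real \<Rightarrow> real \<Rightarrow> real" where
  "G a n u = b0 u - a * b1 u - n * c u"

definition V :: "real \<times> real \<Rightarrow> real \<Rightarrow> real \<times> real" where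
  "V x a = (eps * deriv (G a (snd x)) (fst x), G a (snd x) (fst x) / kt (snd x))"

definition acrit :: "real \<Rightarrow> real" where
  "acrit u = wronskian b0 c u / wronskian b1 c u"

lemma higher_deriv_G:
  "(deriv ^^ m) (G a n) = (\<lambda>u. (deriv ^^ m) b0 u - a * (deriv ^^ m) b1 u - n * (deriv ^^ m) c u)"
proof (induction m)
  case 0
  show ?case by (simp add: G_def[abs_def])
next
  case (Suc m)
  show ?case
    by (auto simp: Suc fun_eq_iff intro!: DERIV_imp_deriv derivative_eq_intros
        smooth_fun_higher_DERIV smooth_b0 smooth_b1 smooth_c)
qed

lemma smooth_fun_G: "smooth_fun (G a n)"
  using smooth_b0 smooth_b1 smooth_c unfolding smooth_fun_def higher_deriv_G by auto

lemma deriv_G: "deriv (G a n) u = deriv b0 u - a * deriv b1 u - n * deriv c u"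
  using higher_deriv_G[of 1] by simp

lemma deriv2_G:
  "deriv (deriv (G a n)) u = deriv (deriv b0) u - a * deriv (deriv b1) u - n * deriv (deriv c) u"
  using higher_deriv_G[of 2] by (simp add: numeral_2_eq_2)

lemma wronskian_b1_nonzero: "wronskian b1 c u \<noteq> 0"
  using wronskian_b1_neg by (metis less_irrefl)

lemma wronskian_G: "wronskian (G a n) c u = (acrit u - a) * wronskian b1 c u"
  using wronskian_b1_nonzero[of u] unfolding acrit_def wronskian_def deriv_G
  by (simp add: G_def field_simps)

lemma V_eq_0_iff: "V (u, n) a = 0 \<longleftrightarrow> G a n u = 0 \<and> deriv (G a n) u = 0"
  using eps_pos kt_pos[of n] by (auto simp: V_def zero_prod_def)

lemma V_eq_0_iff_acrit: "V (u, n) a = 0 \<longleftrightarrow> a = acrit u \<and> n = (b0 u - a * b1 u) / c u"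
proof -
  have "G a n u = 0 \<longleftrightarrow> n = (b0 u - a * b1 u) / c u"
    using c_pos[of u] by (auto simp: G_def field_simps)
  moreover have "deriv (G a n) u = 0 \<longleftrightarrow> a = acrit u" if "G a n u = 0"
    using wronskian_G[of a n u] that c_pos[of u] wronskian_b1_nonzero[of u]
    by (auto simp: wronskian_def)
  ultimately show ?thesis
    using V_eq_0_iff by blast
qed

lemma equilibriumD:
  assumes "V (u, n) a = 0"
  shows "G a n u = 0" "deriv (G a n) u = 0" "acrit u = a"
  using assms V_eq_0_iff[of u n a] V_eq_0_iff_acrit[of u n a] by auto

lemma DERIV_wronskian_b1: "(wronskian b1 c has_real_derivative deriv (wronskian b1 c) u) (at u)"
  using has_real_derivative_wronskian[OF smooth_b1 smooth_c] by (metis DERIV_imp_deriv)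

lemma DERIV_acrit: "(acrit has_real_derivative deriv acrit u) (at u)"
proof -
  have "wronskian f c differentiable (at u)" if "smooth_fun f" for f
    using has_real_derivative_wronskian[OF that smooth_c] real_differentiable_def by blast
  then show ?thesis
    unfolding DERIV_deriv_iff_real_differentiable acrit_def[abs_def]
    using smooth_b0 smooth_b1 wronskian_b1_nonzero by (auto intro: differentiable_divide)
qed

lemma deriv_acrit_wronskian:
  "deriv acrit u * wronskian b1 c u
     = deriv (deriv (G a n)) u * c u - G a n u * deriv (deriv c) u
       - (acrit u - a) * deriv (wronskian b1 c) u"
proof -
  have "(wronskian (G a n) c has_real_derivative
      deriv acrit u * wronskian b1 c u + (acrit u - a) * deriv (wronskian b1 c) u) (at u)"
    unfolding wronskian_G[abs_def]
    by (rule derivative_eq_intros DERIV_acrit DERIV_wronskian_b1 refl)+ (simp add: algebra_simps)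
  moreover have "(wronskian (G a n) c has_real_derivative
      deriv (deriv (G a n)) u * c u - G a n u * deriv (deriv c) u) (at u)"
    by (rule has_real_derivative_wronskian[OF smooth_fun_G smooth_c])
  ultimately have "deriv acrit u * wronskian b1 c u + (acrit u - a) * deriv (wronskian b1 c) u
      = deriv (deriv (G a n)) u * c u - G a n u * deriv (deriv c) u"
    by (rule DERIV_unique)
  then show ?thesis
    by (simp add: algebra_simps)
qed

lemma deriv_acrit_at_equilibrium:
  assumes "V (u, n) a = 0"
  shows "deriv acrit u * wronskian b1 c u = deriv (deriv (G a n)) u * c u"
  using deriv_acrit_wronskian[of u a n] equilibriumD[OF assms] by simp

lemma deriv2_G_at_degenerate_equilibrium:
  assumes "V (u, n) a = 0" and "deriv acrit u = 0"
  shows "deriv (deriv (G a n)) u = 0"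
  using deriv_acrit_at_equilibrium[OF assms(1)] assms(2) c_pos[of u] by simp

lemma sgn_deriv2_G_at_equilibrium:
  assumes "V (u, n) a = 0"
  shows "sgn (deriv (deriv (G a n)) u) = - sgn (deriv acrit u)"
proof -
  have "sgn (deriv (deriv (G a n)) u) * sgn (c u) = sgn (deriv acrit u) * sgn (wronskian b1 c u)"
    using deriv_acrit_at_equilibrium[OF assms] by (metis sgn_mult)
  then show ?thesis
    using c_pos[of u] wronskian_b1_neg[of u] by simp
qed

lemma deriv2_acrit_at_fold:
  assumes eq: "V (u, n) a = 0" and crit: "deriv acrit u = 0"
  shows "deriv (deriv acrit) u * wronskian b1 c u = deriv (deriv (deriv (G a n))) u * c u"
proof -
  define W where "W = wronskian b1 c"
  define R where "R x = deriv (deriv (G a n)) x * c x - G a n x * deriv (deriv c) x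
    - (acrit x - a) * deriv W x" for x
  \<comment> \<open>deriv acrit = R / W with R u = 0, so its derivative at u is R' u / W u.\<close>
  have "deriv acrit = (\<lambda>x. R x / W x)"
    using deriv_acrit_wronskian wronskian_b1_nonzero
    by (simp add: fun_eq_iff R_def W_def field_simps)
  moreover have "R u = 0"
    using deriv_acrit_wronskian[of u a n] crit by (simp add: R_def W_def)
  moreover have "(R has_real_derivative deriv (deriv (deriv (G a n))) u * c u) (at u)"
    unfolding R_def[abs_def] W_def deriv_wronskian[OF smooth_b1 smooth_c]
    by (rule derivative_eq_intros DERIV_acrit smooth_fun_DERIV smooth_fun_deriv smooth_fun_G
        smooth_b1 smooth_c refl)+
       (simp add: equilibriumD[OF eq] crit deriv2_G_at_degenerate_equilibrium[OF eq crit])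
  ultimately have
    "(deriv acrit has_real_derivative deriv (deriv (deriv (G a n))) u * c u / W u) (at u)"
    using wronskian_b1_nonzero[of u] unfolding W_def
    by (auto intro!: derivative_eq_intros DERIV_wronskian_b1 simp: power2_eq_square)
  then show ?thesis
    using wronskian_b1_nonzero[of u] DERIV_imp_deriv unfolding W_def by fastforce
qed

lemma has_derivative_V:
  assumes eq: "V (u, n) a = 0"
  shows "((\<lambda>x. V x a) has_derivative
           upper_tri2 (eps * deriv (deriv (G a n)) u) (- eps * deriv c u) (- c u / kt n))
         (at (u, n))"
proof -
  have V_eq: "(\<lambda>x. V x a) = (\<lambda>x.
      (eps * (deriv b0 (fst x) - a * deriv b1 (fst x) - snd x * deriv c (fst x)),
       (b0 (fst x) - a * b1 (fst x) - snd x * c (fst x)) * inverse (kt (snd x))))"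
    by (simp add: fun_eq_iff V_def deriv_G G_def divide_inverse)
  have slow: "((\<lambda>x. eps * (deriv b0 (fst x) - a * deriv b1 (fst x) - snd x * deriv c (fst x)))
      has_derivative (\<lambda>h. eps * deriv (deriv (G a n)) u * fst h + - eps * deriv c u * snd h))
      (at (u, n))"
    unfolding deriv2_G
    by (rule has_derivative_eq_rhs, (rule derivative_intros has_derivative_fst_compose
        smooth_fun_DERIV smooth_fun_deriv smooth_b0 smooth_b1 smooth_c)+)
       (simp add: fun_eq_iff algebra_simps)
  have num: "((\<lambda>x. b0 (fst x) - a * b1 (fst x) - snd x * c (fst x))
      has_derivative (\<lambda>h. - c u * snd h)) (at (u, n))"
    by (rule has_derivative_eq_rhs, (rule derivative_intros has_derivative_fst_compose
        smooth_fun_DERIV smooth_b0 smooth_b1 smooth_c)+)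
       (use equilibriumD(2)[OF eq] in \<open>simp add: fun_eq_iff deriv_G algebra_simps\<close>)
  \<comment> \<open>kt may fail to be differentiable at 0, but the numerator vanishes at an
    equilibrium, so continuity of 1 / kt suffices for the second component.\<close>
  have num_zero: "b0 (fst (u, n)) - a * b1 (fst (u, n)) - snd (u, n) * c (fst (u, n)) = 0"
    using equilibriumD(1)[OF eq] by (simp add: G_def)
  have inverse_kt_cont: "isCont (\<lambda>x. inverse (kt (snd x))) (u, n)"
    using kt_pos[of n] by (intro continuous_intros isCont_o2[OF _ kt_cont]) auto
  have fast: "((\<lambda>x. (b0 (fst x) - a * b1 (fst x) - snd x * c (fst x)) * inverse (kt (snd x)))
      has_derivative (\<lambda>h. - c u * snd h * inverse (kt n))) (at (u, n))"
    using has_derivative_mult_isCont_at_zero[OF num num_zero inverse_kt_cont] by simp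
  show ?thesis
    unfolding V_eq upper_tri2_def using has_derivative_Pair[OF slow fast]
    by (simp add: divide_inverse mult.commute mult.left_commute)
qed

lemma has_derivative_V_degenerate:
  assumes "V (u, n) a = 0" and "deriv acrit u = 0"
  shows "((\<lambda>x. V x a) has_derivative upper_tri2 0 (- eps * deriv c u) (- c u / kt n)) (at (u, n))"
  using has_derivative_V[OF assms(1)] deriv2_G_at_degenerate_equilibrium[OF assms] by simp

lemma stable_node_if_deriv_acrit_pos:
  assumes eq: "V (u, n) a = 0" and pos: "deriv acrit u > 0"
  shows "stable_node (\<lambda>x. V x a) (u, n)"
proof -
  let ?L = "upper_tri2 (eps * deriv (deriv (G a n)) u) (- eps * deriv c u) (- c u / kt n)"
  have "deriv (deriv (G a n)) u < 0"
    using sgn_deriv2_G_at_equilibrium[OF eq] pos by (simp add: sgn_if split: if_splits)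
  then show ?thesis
    unfolding stable_node_def using eq has_derivative_V[OF eq] eps_pos c_pos[of u] kt_pos[of n]
    by (intro conjI exI[of _ ?L]) (auto simp: eig2_upper_tri2_iff mult_pos_neg)
qed

lemma saddle_if_deriv_acrit_neg:
  assumes eq: "V (u, n) a = 0" and neg: "deriv acrit u < 0"
  shows "saddle (\<lambda>x. V x a) (u, n)"
proof -
  let ?L = "upper_tri2 (eps * deriv (deriv (G a n)) u) (- eps * deriv c u) (- c u / kt n)"
  have "deriv (deriv (G a n)) u > 0"
    using sgn_deriv2_G_at_equilibrium[OF eq] neg by (simp add: sgn_if split: if_splits)
  then show ?thesis
    unfolding saddle_def using eq has_derivative_V[OF eq] eps_pos c_pos[of u] kt_pos[of n]
    by (intro conjI exI[of _ ?L] exI[of _ "of_real (- c u / kt n)"]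
        exI[of _ "of_real (eps * deriv (deriv (G a n)) u)"]) (auto simp: eig2_upper_tri2_iff)
qed

lemma isolated_nonhyperbolic_if_deriv_acrit_zero:
  assumes eq: "V (u, n) a = 0" and zero: "deriv acrit u = 0"
    and iso: "\<exists>e>0. \<forall>v. v \<noteq> u \<and> \<bar>v - u\<bar> < e \<longrightarrow> acrit v \<noteq> a"
  shows "isolated_nonhyperbolic_eq (\<lambda>x. V x a) (u, n)"
proof -
  obtain e where "e > 0" and iso_e: "\<And>v. v \<noteq> u \<Longrightarrow> \<bar>v - u\<bar> < e \<Longrightarrow> acrit v \<noteq> a"
    using iso by blast
  have "V y a \<noteq> 0" if "y \<noteq> (u, n)" "dist y (u, n) < e" for y
  proof
    assume "V y a = 0"
    then have "acrit (fst y) = a" "snd y = (b0 (fst y) - a * b1 (fst y)) / c (fst y)"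
      using V_eq_0_iff_acrit[of "fst y" "snd y" a] by auto
    moreover have "\<bar>fst y - u\<bar> < e"
      using dist_fst_le[of y "(u, n)"] that(2) by (simp add: dist_real_def)
    ultimately show False
      using that(1) iso_e[of "fst y"] eq V_eq_0_iff_acrit[of u n a] by (cases y) auto
  qed
  then show ?thesis
    unfolding isolated_nonhyperbolic_eq_def
    using eq \<open>e > 0\<close> has_derivative_V_degenerate[OF eq zero]
    by (intro conjI exI[of _ e] exI[of _ "upper_tri2 0 (- eps * deriv c u) (- c u / kt n)"]
        exI[of _ 0]) (auto simp: eig2_upper_tri2_iff)
qed

lemma has_vector_derivative_shifted_jet:
  assumes "smooth_fun F"
  shows "((\<lambda>s. (eps * deriv F (u + s), F (u + s) / kt n)) has_vector_derivative
           (eps * deriv (deriv F) (u + s), deriv F (u + s) / kt n)) (at s)"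
proof -
  have "((\<lambda>s. u + s) has_real_derivative 1) (at s)"
    by (auto intro!: derivative_eq_intros)
  then have "((\<lambda>s. H (u + s)) has_real_derivative deriv H (u + s)) (at s)" if "smooth_fun H" for H
    using DERIV_chain2[OF smooth_fun_DERIV[OF that]] by fastforce
  then show ?thesis
    using assms smooth_fun_deriv[OF assms] kt_pos[of n]
    by (intro has_vector_derivative_Pair)
       (auto intro!: derivative_eq_intros
         simp: has_real_derivative_iff_has_vector_derivative[symmetric])
qed

lemma has_vector_derivative_V_param:
  "((\<lambda>a. V (u, n) a) has_vector_derivative (- eps * deriv b1 u, - b1 u / kt n)) (at a)"
  unfolding V_def deriv_G G_def using kt_pos[of n]
  by (intro has_vector_derivative_Pair)
     (auto intro!: derivative_eq_intros
       simp: has_real_derivative_iff_has_vector_derivative[symmetric])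

lemma generic_fold_if_deriv2_acrit_nonzero:
  assumes eq: "V (u, n) a = 0" and zero: "deriv acrit u = 0"
    and nondeg: "deriv (deriv acrit) u \<noteq> 0"
  shows "generic_fold V (u, n) a"
proof -
  define L where "L = upper_tri2 0 (- eps * deriv c u) (- c u / kt n)"
  define p :: "real \<times> real" where "p = (1, - eps * deriv c u * kt n / c u)"
  define q :: "real \<times> real" where "q = (1, 0)"
  define g1 where
    "g1 = (\<lambda>s. (eps * deriv (deriv (G a n)) (u + s), deriv (G a n) (u + s) / kt n))"
  define B where "B = (eps * deriv (deriv (deriv (G a n))) u, 0::real)"
  define Fa where "Fa = (- eps * deriv b1 u, - b1 u / kt n)"
  have "deriv (deriv (deriv (G a n))) u \<noteq> 0"
    using deriv2_acrit_at_fold[OF eq zero] nondeg wronskian_b1_nonzero[of u] by auto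
  then have "dot2 p B \<noteq> 0"
    using eps_pos by (simp add: p_def B_def dot2_def)
  moreover have "dot2 p Fa \<noteq> 0"
    using eps_pos c_pos[of u] kt_pos[of n] wronskian_b1_neg[of u]
    by (simp add: p_def Fa_def dot2_def wronskian_def field_simps)
  moreover have "((\<lambda>s. V ((u, n) + s *\<^sub>R q) a) has_vector_derivative g1 s) (at s)" for s
    using has_vector_derivative_shifted_jet[OF smooth_fun_G[of a n], where u=u and n=n and s=s]
    by (simp add: V_def q_def g1_def)
  moreover have "(g1 has_vector_derivative B) (at 0)"
    using has_vector_derivative_shifted_jet[OF smooth_fun_deriv[OF smooth_fun_G[of a n]],
        where u=u and n=n and s=0]
    by (simp add: g1_def B_def deriv2_G_at_degenerate_equilibrium[OF eq zero])
  moreover have "q \<noteq> 0" "L q = 0" "\<forall>w. dot2 p (L w) = 0" "dot2 p q = 1"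
    using c_pos[of u] kt_pos[of n]
    by (auto simp: p_def q_def L_def upper_tri2_def dot2_def zero_prod_def)
  moreover have "((\<lambda>a. V (u, n) a) has_vector_derivative Fa) (at a)"
    unfolding Fa_def by (rule has_vector_derivative_V_param)
  ultimately have null_vectors:
    "\<exists>p q. q \<noteq> 0 \<and> L q = 0 \<and> (\<forall>w. dot2 p (L w) = 0) \<and> dot2 p q = 1 \<and>
      (\<exists>g1 B e. e > 0 \<and>
         (\<forall>s. \<bar>s\<bar> < e \<longrightarrow>
            ((\<lambda>s. V ((u, n) + s *\<^sub>R q) a) has_vector_derivative g1 s) (at s)) \<and>
         (g1 has_vector_derivative B) (at 0) \<and> dot2 p B \<noteq> 0) \<and>
      (\<exists>Fa. ((\<lambda>a. V (u, n) a) has_vector_derivative Fa) (at a) \<and> dot2 p Fa \<noteq> 0)"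
    by (intro exI[of _ p] exI[of _ q] conjI exI[of _ g1] exI[of _ B] exI[of _ "1::real"]
        exI[of _ Fa]) auto
  have "eig2 L mu \<longleftrightarrow> mu = 0 \<or> mu = of_real (- c u / kt n)" for mu
    by (simp add: L_def eig2_upper_tri2_iff)
  moreover have "- c u / kt n < 0"
    using c_pos[of u] kt_pos[of n] by simp
  ultimately show ?thesis
    unfolding generic_fold_def using eq has_derivative_V_degenerate[OF eq zero] null_vectors
    by (intro conjI exI[of _ L] exI[of _ "of_real (- c u / kt n)"]) (auto simp: L_def)
qed

lemma has_real_derivative_G_over_c:
  "((\<lambda>v. G a n v / c v) has_real_derivative (acrit u - a) * wronskian b1 c u / (c u)\<^sup>2) (at u)"
proof -
  have "((\<lambda>v. G a n v / c v) has_real_derivative wronskian (G a n) c u / (c u)\<^sup>2) (at u)"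
    using c_pos[of u]
    by (auto intro!: derivative_eq_intros smooth_fun_DERIV smooth_fun_G smooth_c
        simp: wronskian_def power2_eq_square)
  then show ?thesis
    by (simp add: wronskian_G)
qed

lemma deriv_G_over_c_eq_0_iff: "deriv (\<lambda>v. G a n v / c v) u = 0 \<longleftrightarrow> acrit u = a"
  using DERIV_imp_deriv[OF has_real_derivative_G_over_c] c_pos[of u] wronskian_b1_nonzero[of u]
  by simp

lemma exists_deriv_acrit_pos:
  assumes "filterlim (\<lambda>u. b0 u / c u) at_bot at_infinity"
  shows "\<exists>u. deriv acrit u > 0"
proof -
  have "(\<lambda>u. b0 u / c u) = (\<lambda>u. G 0 0 u / c u)"
    by (simp add: G_def)
  then obtain z1 z2 where "z1 < z2"
    and "acrit z1 * wronskian b1 c z1 / (c z1)\<^sup>2 > 0"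
    and "acrit z2 * wronskian b1 c z2 / (c z2)\<^sup>2 < 0"
    using filterlim_at_bot_at_infinity_imp_deriv_signs[OF assms,
        of "\<lambda>u. acrit u * wronskian b1 c u / (c u)\<^sup>2"]
      has_real_derivative_G_over_c[of 0 0] by auto
  then have "acrit z1 < 0" "acrit z2 > 0"
    using wronskian_b1_neg[of z1] wronskian_b1_neg[of z2] c_pos[of z1] c_pos[of z2]
    by (auto simp: zero_less_divide_iff divide_less_0_iff zero_less_mult_iff mult_less_0_iff)
  moreover obtain t where "acrit z2 - acrit z1 = (z2 - z1) * deriv acrit t"
    using MVT2[OF \<open>z1 < z2\<close> DERIV_acrit] by blast
  ultimately have "(z2 - z1) * deriv acrit t > 0"
    by linarith
  then show ?thesis
    using \<open>z1 < z2\<close> by (auto simp: zero_less_mult_iff)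
qed

end

theorem lemma2:
  fixes eps :: real and k b0 b1 c :: "real \<Rightarrow> real"
    and b h :: "real \<Rightarrow> real \<Rightarrow> real" and kt astar hstar :: "real \<Rightarrow> real"
    and f :: "real \<times> real \<Rightarrow> real \<Rightarrow> real \<times> real"
  assumes eps: "eps > 0"
    and k_C1: "C1_fun k" and k_zero: "\<forall>x. k x = 0 \<longleftrightarrow> x = 0" and k'0: "deriv k 0 > 0"
    and smooth: "smooth_fun b0" "smooth_fun b1" "smooth_fun c"
    and b1_pos: "\<forall>u. b1 u > 0" and b1'_neg: "\<forall>u. deriv b1 u < 0"
    and c_pos: "\<forall>u. c u > 0"
    and c_b1: "\<forall>u. deriv c u / c u > deriv b1 u / b1 u"
    and b_def: "b = (\<lambda>u a. b0 u - a * b1 u)"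
    and h_def: "h = (\<lambda>u a. b u a / c u)"
    and crit_fin: "\<forall>a. finite {u. deriv (\<lambda>v. h v a) u = 0}"
    and crit_iso: "\<forall>a. \<forall>u. deriv (\<lambda>v. h v a) u = 0 \<longrightarrow>
                      (\<exists>e>0. \<forall>v. v \<noteq> u \<and> \<bar>v - u\<bar> < e \<longrightarrow> deriv (\<lambda>w. h w a) v \<noteq> 0)"
    and h_lim: "\<forall>a\<ge>0. filterlim (\<lambda>u. h u a) at_bot at_infinity"
    and kt_def: "kt = (\<lambda>n. if n = 0 then deriv k 0 else k n / n)"
    and f_def: "f = (\<lambda>(u, n) a. (eps * (deriv (\<lambda>v. b v a) u - deriv c u * n),
                                 (b u a - c u * n) / kt n))"
    and astar_def: "astar = (\<lambda>u. (deriv b0 u * c u - b0 u * deriv c u) /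
                                 (deriv b1 u * c u - b1 u * deriv c u))"
    and hstar_def: "hstar = (\<lambda>u. h u (astar u))"
  shows "{((u, n), a). f (u, n) a = 0} = {((u, n), a). a = astar u \<and> n = hstar u}
    \<and> {((u, n), a). f (u, n) a = 0} =
        {((u, n), a). f (u, n) a = 0 \<and> deriv astar u > 0}
      \<union> {((u, n), a). f (u, n) a = 0 \<and> deriv astar u < 0}
      \<union> {((u, n), a). f (u, n) a = 0 \<and> deriv astar u = 0}
    \<and> {((u, n), a). f (u, n) a = 0 \<and> deriv astar u > 0} \<noteq> {}
    \<and> (\<forall>u n a. f (u, n) a = 0 \<and> deriv astar u > 0 \<longrightarrow> stable_node (\<lambda>x. f x a) (u, n))
    \<and> (\<forall>u n a. f (u, n) a = 0 \<and> deriv astar u < 0 \<longrightarrow> saddle (\<lambda>x. f x a) (u, n))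
    \<and> (\<forall>u n a. f (u, n) a = 0 \<and> deriv astar u = 0 \<longrightarrow> isolated_nonhyperbolic_eq (\<lambda>x. f x a) (u, n))
    \<and> (\<forall>u n a. f (u, n) a = 0 \<and> deriv astar u = 0 \<and> deriv (deriv astar) u \<noteq> 0 \<longrightarrow>
         generic_fold f (u, n) a)"
proof -
  have kt: "isCont kt n" "kt n > 0" for n
    using slope_at_zero_isCont_pos[OF k_C1 _ k'0] k_zero unfolding kt_def by auto
  have "wronskian b1 c u < 0" for u
    using c_b1[rule_format, of u] b1_pos[rule_format, of u] c_pos[rule_format, of u]
    by (auto simp: wronskian_def field_simps)
  then interpret reduced_field eps b0 b1 c kt
    using eps smooth c_pos kt by unfold_locales auto
  have deriv_b: "deriv (\<lambda>v. b v a) u = deriv b0 u - a * deriv b1 u" for a u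
    unfolding b_def by (auto intro!: DERIV_imp_deriv derivative_eq_intros smooth_fun_DERIV smooth)
  have f_eq: "f = V"
    unfolding f_def V_def deriv_G deriv_b by (simp add: fun_eq_iff b_def G_def algebra_simps)
  have astar_eq: "astar = acrit"
    unfolding astar_def acrit_def[abs_def] wronskian_def ..
  have equilibria: "f (u, n) a = 0 \<longleftrightarrow> a = astar u \<and> n = hstar u" for u n a
    unfolding f_eq astar_eq hstar_def h_def b_def using V_eq_0_iff_acrit by auto
  have "(\<lambda>v. h v a) = (\<lambda>v. G a 0 v / c v)" for a
    by (simp add: h_def b_def G_def)
  then have crit_iff: "deriv (\<lambda>v. h v a) u = 0 \<longleftrightarrow> acrit u = a" for a u
    using deriv_G_over_c_eq_0_iff by simp
  have "\<exists>u. deriv astar u > 0"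
    using exists_deriv_acrit_pos h_lim[rule_format, of 0] by (simp add: astar_eq h_def b_def)
  then have stable_nonempty: "{((u, n), a). f (u, n) a = 0 \<and> deriv astar u > 0} \<noteq> {}"
    using equilibria by auto
  have isolated: "isolated_nonhyperbolic_eq (\<lambda>x. V x a) (u, n)"
    if "V (u, n) a = 0" "deriv acrit u = 0" for u n a
    using isolated_nonhyperbolic_if_deriv_acrit_zero[OF that] crit_iso crit_iff
      equilibriumD(3)[OF that(1)] by metis
  show ?thesis
    unfolding f_eq astar_eq
  proof (intro conjI allI impI)
    show "{((u, n), a). V (u, n) a = 0} = {((u, n), a). a = acrit u \<and> n = hstar u}"
      using equilibria unfolding f_eq astar_eq by auto
  qed (use stable_nonempty in \<open>auto simp: f_eq astar_eq intro: stable_node_if_deriv_acrit_pos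
      saddle_if_deriv_acrit_neg isolated generic_fold_if_deriv2_acrit_nonzero\<close>)
qed

end
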